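(* Let $\mathbb{K}$ be a field, $\theta=(\{X_t\}_{t\in G},\{h_t\}_{t\in G})$ a free partial action of a group $G$ on a set $X$, and $\alpha=(\{\mathcal{F}_0(X_t)\}_{t\in G},\{\alpha_t\}_{t\in G})$ the associated partial action on $\mathcal{F}_0(X)$, $\alpha_t(f)=f\circ h_{t^{-1}}$. Let $R=\{(x,h_t(x)): t\in G,\ x\in X_{t^{-1}}\}$ and let $\mathcal{F}_0(R)$ be the space of finitely supported functions $R\to\mathbb{K}$ with pointwise linear operations and product $$(f*g)(x,h_t(x))=\sum_{s\in G,\ x\in X_{s^{-1}}} f(x,h_s(x))\,g(h_s(x),h_t(x)).$$ Then the algebras $\mathcal{F}_0(R)$ and $\mathcal{F}_0(X)\rtimes_\alpha G$ are isomorphic.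
   Context: $\mathcal{F}_0(X)$ is the $\mathbb{K}$-algebra of finitely supported functions $X\to\mathbb{K}$ with pointwise operations; $\mathcal{F}_0(X_t)=\{f\in\mathcal{F}_0(X): f=0 \text{ off } X_t\}$. A partial action of $G$ on a set $X$: subsets $X_t$, bijections $h_t:X_{t^{-1}}\to X_t$, $X_e=X$, $h_e=\mathrm{id}$, $h_t(X_{t^{-1}}\cap X_s)=X_t\cap X_{ts}$, $h_th_s=h_{ts}$ on $X_{s^{-1}}\cap X_{s^{-1}t^{-1}}$; free means $h_t(x)=x$ implies $t=e$. The partial skew group ring $\mathcal{F}_0(X)\rtimes_\alpha G$ is the set of finite formal sums $\sum_t a_t\delta_t$ with $a_t\in\mathcal{F}_0(X_t)$, usual addition, and multiplication determined by $(a_t\delta_t)(b_s\delta_s)=\alpha_t(\alpha_{t^{-1}}(a_t)b_s)\delta_{ts}$. *)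

theory Defs
  imports "HOL-Algebra.Group"
begin

definition partial_action ::
  "('g, 'm) monoid_scheme \<Rightarrow> 'x set \<Rightarrow> ('g \<Rightarrow> 'x set) \<Rightarrow> ('g \<Rightarrow> 'x \<Rightarrow> 'x) \<Rightarrow> bool" where
  "partial_action G X Xs h \<longleftrightarrow>
     (\<forall>t\<in>carrier G. Xs t \<subseteq> X) \<and>
     Xs \<one>\<^bsub>G\<^esub> = X \<and> (\<forall>x\<in>X. h \<one>\<^bsub>G\<^esub> x = x) \<and>
     (\<forall>t\<in>carrier G. bij_betw (h t) (Xs (inv\<^bsub>G\<^esub> t)) (Xs t)) \<and>
     (\<forall>t\<in>carrier G. \<forall>s\<in>carrier G.
        h t ` (Xs (inv\<^bsub>G\<^esub> t) \<inter> Xs s) = Xs t \<inter> Xs (t \<otimes>\<^bsub>G\<^esub> s)) \<and>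
     (\<forall>t\<in>carrier G. \<forall>s\<in>carrier G.
        \<forall>x\<in>Xs (inv\<^bsub>G\<^esub> s) \<inter> Xs (inv\<^bsub>G\<^esub> s \<otimes>\<^bsub>G\<^esub> inv\<^bsub>G\<^esub> t).
          h t (h s x) = h (t \<otimes>\<^bsub>G\<^esub> s) x)"

definition free_partial_action ::
  "('g, 'm) monoid_scheme \<Rightarrow> 'x set \<Rightarrow> ('g \<Rightarrow> 'x set) \<Rightarrow> ('g \<Rightarrow> 'x \<Rightarrow> 'x) \<Rightarrow> bool" where
  "free_partial_action G X Xs h \<longleftrightarrow> partial_action G X Xs h \<and>
     (\<forall>t\<in>carrier G. \<forall>x\<in>Xs (inv\<^bsub>G\<^esub> t). h t x = x \<longrightarrow> t = \<one>\<^bsub>G\<^esub>)"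

definition alpha ::
  "('g, 'm) monoid_scheme \<Rightarrow> ('g \<Rightarrow> 'x set) \<Rightarrow> ('g \<Rightarrow> 'x \<Rightarrow> 'x) \<Rightarrow> 'g \<Rightarrow> ('x \<Rightarrow> 'k::field) \<Rightarrow> 'x \<Rightarrow> 'k" where
  "alpha G Xs h t f = (\<lambda>x. if x \<in> Xs t then f (h (inv\<^bsub>G\<^esub> t) x) else 0)"

text \<open>Partial skew group ring F_0(X) \<rtimes>_alpha G: a finite formal sum \<Sum> a_t delta_t
  is represented by the function t \<mapsto> a_t, with a_t \<in> F_0(X_t) and only finitely many
  (t,x) with a t x \<noteq> 0.\<close>
definition skew_carrier ::
  "('g, 'm) monoid_scheme \<Rightarrow> ('g \<Rightarrow> 'x set) \<Rightarrow> ('g \<Rightarrow> 'x \<Rightarrow> 'k::field) set" where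
  "skew_carrier G Xs = {a. finite {(t, x). a t x \<noteq> 0} \<and>
     (\<forall>t x. a t x \<noteq> 0 \<longrightarrow> t \<in> carrier G \<and> x \<in> Xs t)}"

definition skew_supp :: "('g, 'm) monoid_scheme \<Rightarrow> ('g \<Rightarrow> 'x \<Rightarrow> 'k::field) \<Rightarrow> 'g set" where
  "skew_supp G a = {t \<in> carrier G. a t \<noteq> (\<lambda>x. 0)}"

text \<open>Product extending (a_t delta_t)(b_s delta_s) = alpha_t(alpha_(t^-1)(a_t) b_s) delta_(ts) bilinearly.\<close>
definition skew_mult ::
  "('g, 'm) monoid_scheme \<Rightarrow> ('g \<Rightarrow> 'x set) \<Rightarrow> ('g \<Rightarrow> 'x \<Rightarrow> 'x) \<Rightarrow>
   ('g \<Rightarrow> 'x \<Rightarrow> 'k::field) \<Rightarrow> ('g \<Rightarrow> 'x \<Rightarrow> 'k) \<Rightarrow> ('g \<Rightarrow> 'x \<Rightarrow> 'k)" where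
  "skew_mult G Xs h a b = (\<lambda>r x.
     \<Sum>t\<in>skew_supp G a. \<Sum>s\<in>skew_supp G b.
       if t \<otimes>\<^bsub>G\<^esub> s = r
       then alpha G Xs h t (\<lambda>y. alpha G Xs h (inv\<^bsub>G\<^esub> t) (a t) y * b s y) x
       else 0)"

definition orbit_rel ::
  "('g, 'm) monoid_scheme \<Rightarrow> ('g \<Rightarrow> 'x set) \<Rightarrow> ('g \<Rightarrow> 'x \<Rightarrow> 'x) \<Rightarrow> ('x \<times> 'x) set" where
  "orbit_rel G Xs h = {(x, h t x) | t x. t \<in> carrier G \<and> x \<in> Xs (inv\<^bsub>G\<^esub> t)}"

definition F0R ::
  "('g, 'm) monoid_scheme \<Rightarrow> ('g \<Rightarrow> 'x set) \<Rightarrow> ('g \<Rightarrow> 'x \<Rightarrow> 'x) \<Rightarrow> ('x \<times> 'x \<Rightarrow> 'k::field) set" where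
  "F0R G Xs h = {f. finite {p. f p \<noteq> 0} \<and> (\<forall>p. f p \<noteq> 0 \<longrightarrow> p \<in> orbit_rel G Xs h)}"

text \<open>(f*g)(x, h_t x) = \<Sum>_{s \<in> G, x \<in> X_(s^-1)} f(x, h_s x) g(h_s x, h_t x);
  the sum is written over the (finitely many) s for which the summand may be nonzero.\<close>
definition R_mult ::
  "('g, 'm) monoid_scheme \<Rightarrow> ('g \<Rightarrow> 'x set) \<Rightarrow> ('g \<Rightarrow> 'x \<Rightarrow> 'x) \<Rightarrow>
   ('x \<times> 'x \<Rightarrow> 'k::field) \<Rightarrow> ('x \<times> 'x \<Rightarrow> 'k) \<Rightarrow> ('x \<times> 'x \<Rightarrow> 'k)" where
  "R_mult G Xs h f g = (\<lambda>(x, z).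
     if (x, z) \<in> orbit_rel G Xs h
     then (\<Sum>s\<in>{s\<in>carrier G. x \<in> Xs (inv\<^bsub>G\<^esub> s) \<and> f (x, h s x) \<noteq> 0}.
             f (x, h s x) * g (h s x, z))
     else 0)"

end

theory Submission
  imports Defs
begin

text \<open>The isomorphism sends f \<in> F_0(R) to \<Sum>_t a_t \<delta>_t with a_t(x) = f(x, h_{t^{-1}} x) for x \<in> X_t.
  Since (x, h_{t^{-1}} x) runs over R as (t, x) runs over the pairs with x \<in> X_t, and freeness
  makes this parametrisation injective, the map is a linear bijection. For multiplicativity,
  the skew product is (ab)_r(x) = \<Sum>_t a_t(x) b_{t^{-1}r}(h_{t^{-1}} x); substituting t = s^{-1}
  and using h_{(sr)^{-1}}(h_s x) = h_{r^{-1}} x turns it into the convolution sum defining f * g.\<close>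

locale group_partial_action = group G for G :: "('g, 'm) monoid_scheme" (structure) +
  fixes X :: "'x set" and Xs :: "'g \<Rightarrow> 'x set" and h :: "'g \<Rightarrow> 'x \<Rightarrow> 'x"
  assumes partial_action: "partial_action G X Xs h"
begin

lemma Xs_one: "Xs \<one> = X"
  and h_one: "x \<in> X \<Longrightarrow> h \<one> x = x"
  and Xs_subset: "t \<in> carrier G \<Longrightarrow> Xs t \<subseteq> X"
  and h_bij: "t \<in> carrier G \<Longrightarrow> bij_betw (h t) (Xs (inv t)) (Xs t)"
  and h_image: "\<lbrakk>t \<in> carrier G; s \<in> carrier G\<rbrakk> \<Longrightarrow>
                 h t ` (Xs (inv t) \<inter> Xs s) = Xs t \<inter> Xs (t \<otimes> s)"
  and h_comp: "\<lbrakk>t \<in> carrier G; s \<in> carrier G; x \<in> Xs (inv s); x \<in> Xs (inv s \<otimes> inv t)\<rbrakk> \<Longrightarrow>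
                 h t (h s x) = h (t \<otimes> s) x"
  using partial_action by (simp_all add: partial_action_def)

lemma h_mem: "\<lbrakk>s \<in> carrier G; x \<in> Xs (inv s)\<rbrakk> \<Longrightarrow> h s x \<in> Xs s"
  using h_bij bij_betw_apply by metis

lemma h_inv_h: "\<lbrakk>s \<in> carrier G; x \<in> Xs (inv s)\<rbrakk> \<Longrightarrow> h (inv s) (h s x) = x"
proof -
  assume s: "s \<in> carrier G" and x: "x \<in> Xs (inv s)"
  have "x \<in> Xs (inv s \<otimes> inv (inv s))" using s x Xs_subset[of "inv s"] by (auto simp: Xs_one)
  then have "h (inv s) (h s x) = h (inv s \<otimes> s) x" using h_comp[of "inv s" s x] s x by simp
  also have "\<dots> = x" using s x Xs_subset[of "inv s"] by (auto simp: h_one)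
  finally show ?thesis .
qed

lemma h_h_inv: "\<lbrakk>t \<in> carrier G; x \<in> Xs t\<rbrakk> \<Longrightarrow> h t (h (inv t) x) = x"
  using h_inv_h[of "inv t" x] by simp

lemma h_inv_mem: "\<lbrakk>t \<in> carrier G; x \<in> Xs t\<rbrakk> \<Longrightarrow> h (inv t) x \<in> Xs (inv t)"
  using h_mem[of "inv t" x] by simp

lemma h_mem_mult: "\<lbrakk>s \<in> carrier G; r \<in> carrier G; x \<in> Xs (inv s); x \<in> Xs r\<rbrakk> \<Longrightarrow>
    h s x \<in> Xs (s \<otimes> r)"
  using h_image[of s r] by blast

lemma h_inv_mult_h: "\<lbrakk>s \<in> carrier G; r \<in> carrier G; x \<in> Xs (inv s); x \<in> Xs r\<rbrakk> \<Longrightarrow>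
    h (inv (s \<otimes> r)) (h s x) = h (inv r) x"
proof -
  assume s: "s \<in> carrier G" and r: "r \<in> carrier G" and x: "x \<in> Xs (inv s)" "x \<in> Xs r"
  have "inv s \<otimes> (s \<otimes> r) = r" using s r by (simp add: m_assoc[symmetric])
  then have "x \<in> Xs (inv s \<otimes> inv (inv (s \<otimes> r)))" using s r x by simp
  then have "h (inv (s \<otimes> r)) (h s x) = h (inv (s \<otimes> r) \<otimes> s) x"
    using h_comp[of "inv (s \<otimes> r)" s x] s r x by blast
  also have "\<dots> = h (inv r) x"
    using s r by (simp add: inv_mult_group m_assoc)
  finally show ?thesis .
qed

lemma alpha_alpha_inv_mult: "t \<in> carrier G \<Longrightarrow>
    alpha G Xs h t (\<lambda>y. alpha G Xs h (inv t) c y * d y) x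
      = (if x \<in> Xs t then c x * d (h (inv t) x) else 0)"
  using h_inv_mem[of t x] h_h_inv[of t x] by (simp add: alpha_def)

lemma skew_carrierD:
  assumes "a \<in> skew_carrier G Xs" and "a t x \<noteq> 0"
  shows "t \<in> carrier G" and "x \<in> Xs t"
  using assms by (auto simp: skew_carrier_def)

lemma finite_skew_supp: "a \<in> skew_carrier G Xs \<Longrightarrow> finite (skew_supp G a)"
proof -
  assume a: "a \<in> skew_carrier G Xs"
  have "skew_supp G a \<subseteq> fst ` {(t, x). a t x \<noteq> 0}"
    by (force simp: skew_supp_def image_iff)
  then show ?thesis using a finite_subset by (auto simp: skew_carrier_def)
qed

lemma skew_mult_eq_sum:
  assumes a: "a \<in> skew_carrier G Xs" and b: "b \<in> skew_carrier G Xs" and r: "r \<in> carrier G"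
  shows "skew_mult G Xs h a b r x = (\<Sum>t | a t x \<noteq> 0. a t x * b (inv t \<otimes> r) (h (inv t) x))"
proof -
  define E where "E t s = (if x \<in> Xs t then a t x * b s (h (inv t) x) else 0)" for t s
  have inner: "(\<Sum>s\<in>skew_supp G b. if t \<otimes> s = r then E t s else 0) = E t (inv t \<otimes> r)"
    if t: "t \<in> carrier G" for t
  proof -
    have "(\<Sum>s\<in>skew_supp G b. if t \<otimes> s = r then E t s else 0)
        = (\<Sum>s\<in>skew_supp G b. if s = inv t \<otimes> r then E t s else 0)"
      using t r by (intro sum.cong refl) (auto simp: skew_supp_def inv_solve_left)
    also have "\<dots> = E t (inv t \<otimes> r)"
      using finite_skew_supp[OF b] t r by (auto simp: sum.delta' skew_supp_def E_def)
    finally show ?thesis .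
  qed
  have "skew_mult G Xs h a b r x
      = (\<Sum>t\<in>skew_supp G a. \<Sum>s\<in>skew_supp G b. if t \<otimes> s = r then E t s else 0)"
    unfolding skew_mult_def
    by (intro sum.cong refl) (auto simp: skew_supp_def alpha_alpha_inv_mult E_def)
  also have "\<dots> = (\<Sum>t\<in>skew_supp G a. E t (inv t \<otimes> r))"
    by (intro sum.cong refl inner) (simp add: skew_supp_def)
  also have "\<dots> = (\<Sum>t | a t x \<noteq> 0. E t (inv t \<otimes> r))"
    using finite_skew_supp[OF a] skew_carrierD[OF a]
    by (intro sum.mono_neutral_right) (auto simp: skew_supp_def E_def)
  also have "\<dots> = (\<Sum>t | a t x \<noteq> 0. a t x * b (inv t \<otimes> r) (h (inv t) x))"
    using skew_carrierD[OF a] by (intro sum.cong refl) (auto simp: E_def)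
  finally show ?thesis .
qed

lemma skew_mult_outside_carrier: "r \<notin> carrier G \<Longrightarrow> skew_mult G Xs h a b r x = 0"
  by (auto simp: skew_mult_def skew_supp_def intro!: sum.neutral)

lemma skew_mult_outside_domain:
  assumes a: "a \<in> skew_carrier G Xs" and b: "b \<in> skew_carrier G Xs"
    and r: "r \<in> carrier G" and x: "x \<notin> Xs r"
  shows "skew_mult G Xs h a b r x = 0"
  unfolding skew_mult_eq_sum[OF a b r]
proof (rule sum.neutral, clarify)
  fix t assume at: "a t x \<noteq> 0"
  have t: "t \<in> carrier G" and xt: "x \<in> Xs t" using skew_carrierD[OF a at] by simp_all
  show "a t x * b (inv t \<otimes> r) (h (inv t) x) = 0"
  proof (rule ccontr)
    assume "a t x * b (inv t \<otimes> r) (h (inv t) x) \<noteq> 0"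
    then have "h (inv t) x \<in> Xs (inv t \<otimes> r)" using skew_carrierD(2)[OF b] by auto
    then have "h t (h (inv t) x) \<in> Xs (t \<otimes> (inv t \<otimes> r))"
      using h_mem_mult[of t "inv t \<otimes> r"] h_inv_mem[OF t xt] t r by simp
    then show False using x h_h_inv[OF t xt] t r by (simp add: m_assoc[symmetric])
  qed
qed

definition to_skew :: "('x \<times> 'x \<Rightarrow> 'k::field) \<Rightarrow> 'g \<Rightarrow> 'x \<Rightarrow> 'k" where
  "to_skew f = (\<lambda>t x. if t \<in> carrier G \<and> x \<in> Xs t then f (x, h (inv t) x) else 0)"

lemma to_skew_add: "to_skew (\<lambda>p. f p + g p) = (\<lambda>t x. to_skew f t x + to_skew g t x)"
  by (simp add: to_skew_def fun_eq_iff)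

lemma to_skew_smult: "to_skew (\<lambda>p. c * f p) = (\<lambda>t x. c * to_skew f t x)"
  by (simp add: to_skew_def fun_eq_iff)

lemma orbit_relI: "\<lbrakk>t \<in> carrier G; x \<in> Xs (inv t)\<rbrakk> \<Longrightarrow> (x, h t x) \<in> orbit_rel G Xs h"
  unfolding orbit_rel_def by blast

lemma to_skew_mult:
  assumes ff: "to_skew f \<in> skew_carrier G Xs" and gg: "to_skew g \<in> skew_carrier G Xs"
  shows "to_skew (R_mult G Xs h f g) = skew_mult G Xs h (to_skew f) (to_skew g)"
proof (intro ext)
  fix r x
  show "to_skew (R_mult G Xs h f g) r x = skew_mult G Xs h (to_skew f) (to_skew g) r x"
  proof (cases "r \<in> carrier G \<and> x \<in> Xs r")
    case False
    then have "skew_mult G Xs h (to_skew f) (to_skew g) r x = 0"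
      using skew_mult_outside_carrier skew_mult_outside_domain[OF ff gg] by blast
    then show ?thesis using False by (auto simp: to_skew_def)
  next
    case True
    then have r: "r \<in> carrier G" and xr: "x \<in> Xs r" by simp_all
    define S where "S = {s \<in> carrier G. x \<in> Xs (inv s) \<and> f (x, h s x) \<noteq> 0}"
    have nonzero: "{t. to_skew f t x \<noteq> 0} = m_inv G ` S"
    proof (rule subset_antisym; rule subsetI)
      fix t assume "t \<in> {t. to_skew f t x \<noteq> 0}"
      then have "t \<in> carrier G" and "inv t \<in> S" by (auto simp: to_skew_def S_def split: if_splits)
      then show "t \<in> m_inv G ` S" by (metis image_eqI inv_inv)
    qed (auto simp: to_skew_def S_def)
    have inj: "inj_on (m_inv G) S" by (rule inj_on_subset[OF inv_inj]) (auto simp: S_def)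
    have "skew_mult G Xs h (to_skew f) (to_skew g) r x
        = (\<Sum>t\<in>m_inv G ` S. to_skew f t x * to_skew g (inv t \<otimes> r) (h (inv t) x))"
      using skew_mult_eq_sum[OF ff gg r] by (simp add: nonzero)
    also have "\<dots> = (\<Sum>s\<in>S. f (x, h s x) * g (h s x, h (inv r) x))"
      unfolding sum.reindex[OF inj] comp_def
    proof (intro sum.cong refl)
      fix s assume "s \<in> S"
      then have s: "s \<in> carrier G" and xs: "x \<in> Xs (inv s)" by (auto simp: S_def)
      show "to_skew f (inv s) x * to_skew g (inv (inv s) \<otimes> r) (h (inv (inv s)) x)
          = f (x, h s x) * g (h s x, h (inv r) x)"
        using h_mem_mult[OF s r xs xr] h_inv_mult_h[OF s r xs xr] s r xs
        by (simp add: to_skew_def)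
    qed
    also have "\<dots> = to_skew (R_mult G Xs h f g) r x"
      using r xr orbit_relI[of "inv r" x] by (simp add: to_skew_def R_mult_def S_def)
    finally show ?thesis by simp
  qed
qed

end

locale free_group_partial_action = group_partial_action G X Xs h
  for G :: "('g, 'm) monoid_scheme" (structure)
    and X :: "'x set" and Xs :: "'g \<Rightarrow> 'x set" and h :: "'g \<Rightarrow> 'x \<Rightarrow> 'x" +
  assumes free: "\<lbrakk>t \<in> carrier G; x \<in> Xs (inv t); h t x = x\<rbrakk> \<Longrightarrow> t = \<one>"
begin

lemma h_eq_imp_eq:
  assumes s1: "s1 \<in> carrier G" and s2: "s2 \<in> carrier G"
    and x1: "x \<in> Xs (inv s1)" and x2: "x \<in> Xs (inv s2)" and eq: "h s1 x = h s2 x"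
  shows "s1 = s2"
proof -
  have "h s1 x \<in> Xs (inv (inv s1)) \<inter> Xs s2"
    using h_mem[OF s1 x1] h_mem[OF s2 x2] eq s1 by simp
  then have "h (inv s1) (h s1 x) \<in> Xs (inv s1) \<inter> Xs (inv s1 \<otimes> s2)"
    using h_image[of "inv s1" s2] s1 s2 by blast
  then have x12: "x \<in> Xs (inv s1 \<otimes> inv (inv s2))" using h_inv_h[OF s1 x1] s2 by simp
  have "h (inv s2 \<otimes> s1) x = h (inv s2) (h s1 x)"
    using h_comp[of "inv s2" s1 x] s1 s2 x1 x12 by simp
  also have "\<dots> = x" using eq h_inv_h[OF s2 x2] by simp
  finally have "h (inv s2 \<otimes> s1) x = x" .
  moreover have "x \<in> Xs (inv (inv s2 \<otimes> s1))"
    using x12 s1 s2 by (simp add: inv_mult_group)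
  ultimately have "inv s2 \<otimes> s1 = \<one>" using free[of "inv s2 \<otimes> s1" x] s1 s2 by simp
  then have "inv s1 = inv s2" using inv_equality[of "inv s2" s1] s1 s2 by simp
  then show ?thesis using s1 s2 inv_inv by metis
qed

text \<open>By freeness, each point of R is (x, h_t x) for exactly one t.\<close>
definition orbit_label :: "'x \<times> 'x \<Rightarrow> 'g" where
  "orbit_label p = (THE t::'g. t \<in> carrier G \<and> fst p \<in> Xs (inv t) \<and> h t (fst p) = snd p)"

lemma orbit_label_eq: "\<lbrakk>t \<in> carrier G; x \<in> Xs (inv t)\<rbrakk> \<Longrightarrow> orbit_label (x, h t x) = t"
  unfolding orbit_label_def by (rule the_equality) (auto intro: h_eq_imp_eq)

definition of_skew :: "('g \<Rightarrow> 'x \<Rightarrow> 'k::field) \<Rightarrow> 'x \<times> 'x \<Rightarrow> 'k" where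
  "of_skew a = (\<lambda>p. if p \<in> orbit_rel G Xs h then a (inv (orbit_label p)) (fst p) else 0)"

lemma to_skew_in_skew_carrier:
  assumes f: "f \<in> F0R G Xs h" shows "to_skew f \<in> skew_carrier G Xs"
proof -
  have "{(t, x). to_skew f t x \<noteq> 0} \<subseteq> (\<lambda>p. (inv (orbit_label p), fst p)) ` {p. f p \<noteq> 0}"
  proof clarify
    fix t x assume ne: "to_skew f t x \<noteq> 0"
    then have t: "t \<in> carrier G" and xt: "x \<in> Xs t" by (auto simp: to_skew_def split: if_splits)
    have "orbit_label (x, h (inv t) x) = inv t" using orbit_label_eq[of "inv t" x] t xt by simp
    then show "(t, x) \<in> (\<lambda>p. (inv (orbit_label p), fst p)) ` {p. f p \<noteq> 0}"
      using ne t xt by (intro image_eqI[of _ _ "(x, h (inv t) x)"]) (auto simp: to_skew_def)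
  qed
  then have "finite {(t, x). to_skew f t x \<noteq> 0}"
    using f by (auto simp: F0R_def intro: finite_subset)
  then show ?thesis by (auto simp: skew_carrier_def to_skew_def split: if_splits)
qed

lemma of_skew_in_F0R:
  assumes a: "a \<in> skew_carrier G Xs" shows "of_skew a \<in> F0R G Xs h"
proof -
  have "{p. of_skew a p \<noteq> 0} \<subseteq> (\<lambda>(t, x). (x, h (inv t) x)) ` {(t, x). a t x \<noteq> 0}"
  proof clarify
    fix x z assume ne: "of_skew a (x, z) \<noteq> 0"
    then obtain t where t: "t \<in> carrier G" and x: "x \<in> Xs (inv t)" and z: "z = h t x"
      by (auto simp: of_skew_def orbit_rel_def split: if_splits)
    then show "(x, z) \<in> (\<lambda>(t, x). (x, h (inv t) x)) ` {(t, x). a t x \<noteq> 0}"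
      using ne t x z
      by (intro image_eqI[of _ _ "(inv t, x)"]) (auto simp: of_skew_def orbit_relI orbit_label_eq)
  qed
  then have "finite {p. of_skew a p \<noteq> 0}"
    by (rule finite_subset) (use a in \<open>simp add: skew_carrier_def\<close>)
  moreover have "of_skew a p \<noteq> 0 \<Longrightarrow> p \<in> orbit_rel G Xs h" for p
    by (simp add: of_skew_def split: if_splits)
  ultimately show ?thesis by (simp add: F0R_def)
qed

lemma of_skew_to_skew: "f \<in> F0R G Xs h \<Longrightarrow> of_skew (to_skew f) = f"
  by (auto simp: fun_eq_iff of_skew_def to_skew_def orbit_rel_def orbit_label_eq F0R_def)

lemma to_skew_of_skew: "a \<in> skew_carrier G Xs \<Longrightarrow> to_skew (of_skew a) = a"
  using skew_carrierD[of a]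
  by (force simp: fun_eq_iff of_skew_def to_skew_def orbit_relI orbit_label_eq)

lemma bij_betw_to_skew: "bij_betw to_skew (F0R G Xs h) (skew_carrier G Xs)"
  by (rule bij_betwI[of _ _ _ of_skew])
     (auto simp: to_skew_in_skew_carrier of_skew_in_F0R of_skew_to_skew to_skew_of_skew)

end

theorem mainTheorem10:
  fixes G :: "('g, 'm) monoid_scheme"
    and X :: "'x set" and Xs :: "'g \<Rightarrow> 'x set" and h :: "'g \<Rightarrow> 'x \<Rightarrow> 'x"
  assumes "group G"
    and "free_partial_action G X Xs h"
  shows "\<exists>\<Phi> :: ('x \<times> 'x \<Rightarrow> 'k::field) \<Rightarrow> ('g \<Rightarrow> 'x \<Rightarrow> 'k).
     bij_betw \<Phi> (F0R G Xs h) (skew_carrier G Xs) \<and>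
     (\<forall>f\<in>F0R G Xs h. \<forall>g\<in>F0R G Xs h. \<Phi> (\<lambda>p. f p + g p) = (\<lambda>t x. \<Phi> f t x + \<Phi> g t x)) \<and>
     (\<forall>c. \<forall>f\<in>F0R G Xs h. \<Phi> (\<lambda>p. c * f p) = (\<lambda>t x. c * \<Phi> f t x)) \<and>
     (\<forall>f\<in>F0R G Xs h. \<forall>g\<in>F0R G Xs h.
        \<Phi> (R_mult G Xs h f g) = skew_mult G Xs h (\<Phi> f) (\<Phi> g))"
proof -
  interpret free_group_partial_action G X Xs h
    using assms
    by (intro free_group_partial_action.intro group_partial_action.intro
          group_partial_action_axioms.intro free_group_partial_action_axioms.intro)
       (auto simp: free_partial_action_def)
  show ?thesis
    by (intro exI[of _ to_skew] conjI ballI allI bij_betw_to_skew to_skew_add to_skew_smult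
          to_skew_mult to_skew_in_skew_carrier)
qed

end
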